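(* Let $A$ be an associative algebra, $M$ an $A$-bimodule and $H:A\otimes A\to M$ a Hochschild $2$-cocycle. A collection $\{ T_\alpha : M \to A \}_{\alpha \in \Omega}$ of linear maps is an $H$-twisted $\mathcal{O}$-operator family if and only if the collection of graphs $\{ \mathrm{Gr}(T_\alpha) \}_{\alpha \in \Omega}$, $\mathrm{Gr}(T_\alpha)=\{(T_\alpha(u),u): u\in M\}\subset A\oplus M$, is a subalgebra family of the $H$-twisted semidirect product algebra $A \ltimes_H M$.
   Context: $\Omega$ is a semigroup. Hochschild $2$-cocycle: bilinear $H$ with $a \cdot H (b, c) - H ( a \cdot b, c)+ H (a, b \cdot c) - H (a, b) \cdot c =0$. $H$-twisted $\mathcal{O}$-operator family: linear maps $T_\alpha:M\to A$ with $T_\alpha (u) \cdot T_\beta (v) = T_{\alpha \beta} \big( T_\alpha (u) \cdot v + u \cdot T_\beta (v) + H (T_\alpha (u), T_\beta (v)) \big)$ for all $u,v,\alpha,\beta$. $A\ltimes_H M$ is $A\oplus M$ with the associative product $(a,u) \star_H (b, v) = (a \cdot b , a \cdot v + u \cdot b + H (a, b))$. A collection $\{B_\alpha\}_{\alpha\in\Omega}$ of subspaces of an algebra is a subalgebra family if $B_\alpha\cdot B_\beta\subset B_{\alpha\beta}$ for all $\alpha,\beta$. *)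

theory Defs
  imports Complex_Main "HOL-Library.Product_Plus"
begin

text \<open>The algebra A is the type 'a (class ring: associative,
  possibly non-unital), a 'k-vector space via sA. The bimodule M is the type 'm,
  a 'k-vector space via sM, with left action l and right action r.\<close>

definition assoc_algebra :: "('k::field \<Rightarrow> 'a::ring \<Rightarrow> 'a) \<Rightarrow> bool" where
  "assoc_algebra sA \<longleftrightarrow> vector_space sA \<and>
     (\<forall>c a b. sA c (a * b) = sA c a * b \<and> sA c (a * b) = a * sA c b)"

definition bilinear_map ::
  "('k::field \<Rightarrow> 'x::ab_group_add \<Rightarrow> 'x) \<Rightarrow> ('k \<Rightarrow> 'y::ab_group_add \<Rightarrow> 'y)
   \<Rightarrow> ('k \<Rightarrow> 'z::ab_group_add \<Rightarrow> 'z) \<Rightarrow> ('x \<Rightarrow> 'y \<Rightarrow> 'z) \<Rightarrow> bool" where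
  "bilinear_map s1 s2 s3 f \<longleftrightarrow>
     (\<forall>x. Vector_Spaces.linear s2 s3 (f x)) \<and> (\<forall>y. Vector_Spaces.linear s1 s3 (\<lambda>x. f x y))"

definition bimodule ::
  "('k::field \<Rightarrow> 'a::ring \<Rightarrow> 'a) \<Rightarrow> ('k \<Rightarrow> 'm::ab_group_add \<Rightarrow> 'm)
   \<Rightarrow> ('a \<Rightarrow> 'm \<Rightarrow> 'm) \<Rightarrow> ('m \<Rightarrow> 'a \<Rightarrow> 'm) \<Rightarrow> bool" where
  "bimodule sA sM l r \<longleftrightarrow> vector_space sM \<and>
     bilinear_map sA sM sM l \<and> bilinear_map sM sA sM r \<and>
     (\<forall>a b u. l (a * b) u = l a (l b u)) \<and>
     (\<forall>a b u. r (l a u) b = l a (r u b)) \<and>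
     (\<forall>a b u. r u (a * b) = r (r u a) b)"

definition hochschild_2cocycle ::
  "('a::ring \<Rightarrow> 'm \<Rightarrow> 'm) \<Rightarrow> ('m \<Rightarrow> 'a \<Rightarrow> 'm) \<Rightarrow> ('a \<Rightarrow> 'a \<Rightarrow> 'm::ab_group_add) \<Rightarrow> bool" where
  "hochschild_2cocycle l r H \<longleftrightarrow>
     (\<forall>a b c. l a (H b c) - H (a * b) c + H a (b * c) - r (H a b) c = 0)"

definition twisted_O_operator_family ::
  "('a::ring \<Rightarrow> 'm \<Rightarrow> 'm) \<Rightarrow> ('m \<Rightarrow> 'a \<Rightarrow> 'm) \<Rightarrow> ('a \<Rightarrow> 'a \<Rightarrow> 'm::ab_group_add)
   \<Rightarrow> ('o::semigroup_mult \<Rightarrow> 'm \<Rightarrow> 'a) \<Rightarrow> bool" where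
  "twisted_O_operator_family l r H T \<longleftrightarrow>
     (\<forall>\<alpha> \<beta> u v. T \<alpha> u * T \<beta> v =
        T (\<alpha> * \<beta>) (l (T \<alpha> u) v + r u (T \<beta> v) + H (T \<alpha> u) (T \<beta> v)))"

definition twisted_sdp_mult ::
  "('a::ring \<Rightarrow> 'm \<Rightarrow> 'm) \<Rightarrow> ('m \<Rightarrow> 'a \<Rightarrow> 'm) \<Rightarrow> ('a \<Rightarrow> 'a \<Rightarrow> 'm::ab_group_add)
   \<Rightarrow> 'a \<times> 'm \<Rightarrow> 'a \<times> 'm \<Rightarrow> 'a \<times> 'm" where
  "twisted_sdp_mult l r H x y =
     (fst x * fst y, l (fst x) (snd y) + r (snd x) (fst y) + H (fst x) (fst y))"

definition sum_scale ::
  "('k \<Rightarrow> 'a \<Rightarrow> 'a) \<Rightarrow> ('k \<Rightarrow> 'm \<Rightarrow> 'm) \<Rightarrow> 'k \<Rightarrow> 'a \<times> 'm \<Rightarrow> 'a \<times> 'm" where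
  "sum_scale sA sM c x = (sA c (fst x), sM c (snd x))"

definition graph_map :: "('m \<Rightarrow> 'a) \<Rightarrow> ('a \<times> 'm) set" where
  "graph_map T = {(T u, u) | u. True}"

definition subalgebra_family ::
  "('k::field \<Rightarrow> 'v::ab_group_add \<Rightarrow> 'v) \<Rightarrow> ('v \<Rightarrow> 'v \<Rightarrow> 'v)
   \<Rightarrow> ('o::semigroup_mult \<Rightarrow> 'v set) \<Rightarrow> bool" where
  "subalgebra_family s mult B \<longleftrightarrow>
     (\<forall>\<alpha>. module.subspace s (B \<alpha>)) \<and>
     (\<forall>\<alpha> \<beta>. \<forall>x\<in>B \<alpha>. \<forall>y\<in>B \<beta>. mult x y \<in> B (\<alpha> * \<beta>))"

end

theory Submission
  imports Defs
begin

(* The product of two graph points (T u, u) and (S v, v) in the twisted semidirect product has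
   first component T u * S v and second component T u . v + u . S v + H (T u) (S v); it lies on the
   graph of T_(alpha beta) exactly when that map sends the second component to the first, which is
   the O-operator identity. Linearity of each T_alpha makes the graphs subspaces. *)

lemma module_sum_scale:
  assumes "module (sA :: 'k::field \<Rightarrow> 'a::ring \<Rightarrow> 'a)" and "module (sM :: 'k \<Rightarrow> 'm::ab_group_add \<Rightarrow> 'm)"
  shows "module (sum_scale sA sM)"
  using assms unfolding module_def sum_scale_def
  by (auto simp: prod_eq_iff)

lemma subspace_graph_map:
  assumes "Vector_Spaces.linear sM sA (T :: 'm::ab_group_add \<Rightarrow> 'a::ring)"
  shows "module.subspace (sum_scale sA sM) (graph_map T)"
proof -
  interpret T: Vector_Spaces.linear sM sA T by (fact assms)
  have "module (sum_scale sA sM)"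
    by (rule module_sum_scale[OF T.vs2.module_axioms T.vs1.module_axioms])
  then show ?thesis
    by (auto simp: module.subspace_def sum_scale_def graph_map_def T.add T.scale zero_prod_def
        intro: exI[of _ 0])
qed

lemma twisted_sdp_mult_graph_points:
  "twisted_sdp_mult l r H (T u, u) (S v, v) = (T u * S v, l (T u) v + r u (S v) + H (T u) (S v))"
  by (simp add: twisted_sdp_mult_def)

lemma twisted_O_operator_family_iff_graphs_closed:
  "twisted_O_operator_family l r H T \<longleftrightarrow>
    (\<forall>\<alpha> \<beta>. \<forall>x\<in>graph_map (T \<alpha>). \<forall>y\<in>graph_map (T \<beta>).
       twisted_sdp_mult l r H x y \<in> graph_map (T (\<alpha> * \<beta>)))"
  by (auto simp: twisted_O_operator_family_def graph_map_def twisted_sdp_mult_graph_points)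

(* The algebra, bilinearity and cocycle hypotheses only serve to make the twisted semidirect
   product an associative algebra; the equivalence itself needs just the linearity of each T_alpha. *)

theorem proposition3p6:
  fixes sA :: "'k::field \<Rightarrow> 'a::ring \<Rightarrow> 'a"
    and sM :: "'k \<Rightarrow> 'm::ab_group_add \<Rightarrow> 'm"
    and l :: "'a \<Rightarrow> 'm \<Rightarrow> 'm" and r :: "'m \<Rightarrow> 'a \<Rightarrow> 'm"
    and H :: "'a \<Rightarrow> 'a \<Rightarrow> 'm"
    and T :: "'o::semigroup_mult \<Rightarrow> 'm \<Rightarrow> 'a"
  assumes "assoc_algebra sA"
    and "bimodule sA sM l r"
    and "bilinear_map sA sA sM H"
    and "hochschild_2cocycle l r H"
    and "\<forall>\<alpha>. Vector_Spaces.linear sM sA (T \<alpha>)"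
  shows "twisted_O_operator_family l r H T \<longleftrightarrow>
    subalgebra_family (sum_scale sA sM) (twisted_sdp_mult l r H) (\<lambda>\<alpha>. graph_map (T \<alpha>))"
proof -
  have "\<forall>\<alpha>. module.subspace (sum_scale sA sM) (graph_map (T \<alpha>))"
    using assms(5) subspace_graph_map by blast
  then show ?thesis
    by (simp add: subalgebra_family_def twisted_O_operator_family_iff_graphs_closed)
qed

end
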